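(* The relation $\mathcal R_2=\{(w2w,w):w\in\{0,1\}^*\}\subseteq\{0,1,2\}^*\times\{0,1\}^*$ can be computed by a probabilistic finite state transducer with probability $2/3$, and by a quantum finite state transducer with probability $2/3$.
   Context: A probabilistic finite state transducer (pfst) is a tuple $T=(Q,\Sigma_1,\Sigma_2,V,f,q_0,Q_{\rm acc},Q_{\rm rej})$ with finite state set $Q$, finite input/output alphabets $\Sigma_1,\Sigma_2$, initial state $q_0$, disjoint accepting/rejecting sets $Q_{\rm acc},Q_{\rm rej}\subseteq Q$ (the other states are non-halting). For each $a\in\Sigma_1\cup\{\ddagger,\$\}$ ($\ddagger,\$$ are end markers) there is a stochastic $Q\times Q$ matrix $V_a$ and an output function $f_a:Q\to\Sigma_2^*$; $V_\$$ puts all probability on halting states. On input $v$ the machine reads $\ddagger v\$$; in state $q$ reading $a$ it appends $f_a(q)$ to the output tape and moves to state $p$ with probability $(V_a)_{qp}$; if $p$ is accepting (rejecting) it halts and accepts with the current output (rejects). $T(w|v)$ is the probability of accepting with output $w$ on input $v$. A quantum finite state transducer (qfst) has the same data except that each $V_a$ is a unitary on $\ell^2(Q)$ (and $V_\$$ maps the span of non-halting states into the span of halting states). Its non-halting part is a vector $\psi=\sum_{q,w}\alpha_{qw}|q\rangle\otimes|w\rangle\in\ell^2(Q\times\Sigma_2^* )$, initially $|q_0\rangle\otimes|\epsilon\rangle$; reading $a$ maps it to $\psi'=\sum_{q,w}\alpha_{qw}V_a|q\rangle\otimes|wf_a(q)\rangle$ with $V_a|q\rangle=\sum_p(V_a)_{qp}|p\rangle$,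 after which the squared norm of the component of $\psi'$ on $\mathrm{span}(Q_{\rm acc})\otimes|x\rangle$ is added to the probability of accepting with output $x$, the squared norm of the component on $\mathrm{span}(Q_{\rm rej})\otimes\ell^2(\Sigma_2^* )$ to the rejection probability, and the computation continues with the projection onto non-halting states. $T(w|v)$ is defined analogously. For $\alpha>1/2$, $T$ computes $\mathcal R$ with probability $\alpha$ if for all $v,w$: $(v,w)\in\mathcal R\Rightarrow T(w|v)\ge\alpha$ and $(v,w)\notin\mathcal R\Rightarrow T(w|v)\le1-\alpha$. *)

theory Defs
  imports Complex_Main
begin

datatype 'a tape_sym = Inp 'a | LEnd | REnd

text \<open>States are natural numbers drawn from the
 finite set \<open>states\<close>; \<open>trans a q p\<close> is the matrix entry \<open>(V_a)_{qp}\<close>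
 (real for pfst, complex amplitude for qfst); \<open>outf a q\<close> is \<open>f_a(q)\<close>.\<close>
record ('a, 'b, 'c) fst =
  states :: "nat set"
  init   :: nat
  acc    :: "nat set"
  rej    :: "nat set"
  trans  :: "'a tape_sym \<Rightarrow> nat \<Rightarrow> nat \<Rightarrow> 'c"
  outf   :: "'a tape_sym \<Rightarrow> nat \<Rightarrow> 'b list"

definition halting :: "('a, 'b, 'c, 'd) fst_scheme \<Rightarrow> nat set" where
  "halting T = acc T \<union> rej T"

definition fst_basic :: "('a, 'b, 'c, 'd) fst_scheme \<Rightarrow> bool" where
  "fst_basic T \<longleftrightarrow> finite (states T) \<and> init T \<in> states T \<and>
     acc T \<subseteq> states T \<and> rej T \<subseteq> states T \<and> acc T \<inter> rej T = {}"

definition is_pfst :: "('a, 'b, real) fst \<Rightarrow> bool" where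
  "is_pfst T \<longleftrightarrow> fst_basic T \<and>
     (\<forall>a. \<forall>q\<in>states T. \<forall>p\<in>states T. trans T a q p \<ge> 0) \<and>
     (\<forall>a. \<forall>q\<in>states T. (\<Sum>p\<in>states T. trans T a q p) = 1) \<and>
     (\<forall>q\<in>states T - halting T. \<forall>p\<in>states T - halting T. trans T REnd q p = 0)"

text \<open>Quantum fst: every \<open>V_a\<close> unitary on \<open>\<ell>^2(Q)\<close>, where \<open>V_a|q\<rangle> = \<Sum>_p (V_a)_{qp}|p\<rangle>\<close>
 (for a finite-dimensional space, unitarity = orthonormality of the images of the basis);
 \<open>V_$\<close> maps the span of non-halting states into the span of halting states.\<close>
definition is_qfst :: "('a, 'b, complex) fst \<Rightarrow> bool" where
  "is_qfst T \<longleftrightarrow> fst_basic T \<and>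
     (\<forall>a. \<forall>q\<in>states T. \<forall>q'\<in>states T.
        (\<Sum>p\<in>states T. trans T a q p * cnj (trans T a q' p)) = (if q = q' then 1 else 0)) \<and>
     (\<forall>q\<in>states T - halting T. \<forall>p\<in>states T - halting T. trans T REnd q p = 0)"

definition tape :: "'a list \<Rightarrow> 'a tape_sym list" where
  "tape v = LEnd # map Inp v @ [REnd]"

text \<open>Computation paths \<open>q_0 = qs!0, qs!1, \<dots>, qs!k = p\<close> that read the first \<open>k\<close> tape symbols,
 pass only through non-halting states strictly between, end (halt) in \<open>p\<close>, and produce
 output \<open>x\<close> (the output \<open>f_{t_i}(q_i)\<close> is appended on each step, including the last).\<close>
definition runs :: "('a, 'b, 'c) fst \<Rightarrow> 'a tape_sym list \<Rightarrow> nat \<Rightarrow> 'b list \<Rightarrow> nat \<Rightarrow> nat list set" where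
  "runs T t k x p = {qs. length qs = Suc k \<and> set qs \<subseteq> states T \<and> qs ! 0 = init T \<and> qs ! k = p \<and>
      (\<forall>i\<in>{1..<k}. qs ! i \<notin> halting T) \<and>
      concat (map (\<lambda>i. outf T (t ! i) (qs ! i)) [0..<k]) = x}"

definition path_weight :: "('a, 'b, 'c::comm_monoid_mult) fst \<Rightarrow> 'a tape_sym list \<Rightarrow> nat \<Rightarrow> nat list \<Rightarrow> 'c" where
  "path_weight T t k qs = (\<Prod>i<k. trans T (t ! i) (qs ! i) (qs ! Suc i))"

definition pfst_prob :: "('a, 'b, real) fst \<Rightarrow> 'b list \<Rightarrow> 'a list \<Rightarrow> real" where
  "pfst_prob T w v = (let t = tape v in
     \<Sum>k\<in>{1..length t}. \<Sum>p\<in>acc T. \<Sum>qs\<in>runs T t k w p. path_weight T t k qs)"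

text \<open>\<open>T(w|v)\<close> for a qfst: after reading the \<open>k\<close>-th symbol, the amplitude of \<open>|p\<rangle>\<otimes>|w\<rangle>\<close> in
 \<open>\<psi>'\<close> is the sum of the path amplitudes; the squared norm of the component on
 \<open>span(Q_acc)\<otimes>|w\<rangle>\<close> is added to the acceptance probability with output \<open>w\<close>.\<close>
definition qfst_prob :: "('a, 'b, complex) fst \<Rightarrow> 'b list \<Rightarrow> 'a list \<Rightarrow> real" where
  "qfst_prob T w v = (let t = tape v in
     \<Sum>k\<in>{1..length t}. \<Sum>p\<in>acc T. (cmod (\<Sum>qs\<in>runs T t k w p. path_weight T t k qs))\<^sup>2)"

definition computes_with ::
  "('m \<Rightarrow> 'b list \<Rightarrow> 'a list \<Rightarrow> real) \<Rightarrow> 'm \<Rightarrow> ('a list \<times> 'b list) set \<Rightarrow> real \<Rightarrow> bool" where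
  "computes_with P T R \<alpha> \<longleftrightarrow> (\<forall>v w. ((v, w) \<in> R \<longrightarrow> P T w v \<ge> \<alpha>) \<and>
                                   ((v, w) \<notin> R \<longrightarrow> P T w v \<le> 1 - \<alpha>))"

datatype sym3 = T0 | T1 | T2
datatype bit = B0 | B1

fun bit_to_sym3 :: "bit \<Rightarrow> sym3" where
  "bit_to_sym3 B0 = T0" | "bit_to_sym3 B1 = T1"

definition R2 :: "(sym3 list \<times> bit list) set" where
  "R2 = {(map bit_to_sym3 w @ [T2] @ map bit_to_sym3 w, w) | w. True}"

end

theory Submission
  imports Defs
begin

text \<open>On the left end marker the machine leaves its start state for three branches, each
  with probability 1/3 (amplitude 1/\<surd>3 in the quantum case); afterwards it is deterministic.
  The first branch copies the input up to the first 2 to the output and accepts at the right end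
  marker if no second 2 follows; the second branch skips to the first 2, copies the rest of the
  input and accepts at the right end marker; the third rejects at once. Both accepting branches
  produce \<open>w\<close> on input \<open>v\<close> exactly when \<open>v = w2w\<close>. Since the two branches accept in
  different states they never interfere, so in both models \<open>T(w|v)\<close> is 1/3 times the number
  of branches accepting \<open>v\<close> with output \<open>w\<close>: 2/3 on \<open>R\<^sub>2\<close> and at most 1/3 off it.\<close>

section \<open>Path sums\<close>

definition runs_from ::
  "('a, 'b, 'c) fst \<Rightarrow> nat \<Rightarrow> 'a tape_sym list \<Rightarrow> nat \<Rightarrow> 'b list \<Rightarrow> nat \<Rightarrow> nat list set" where
  "runs_from T q t k x p = {qs. length qs = Suc k \<and> set qs \<subseteq> states T \<and> qs ! 0 = q \<and> qs ! k = p \<and>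
      (\<forall>i\<in>{1..<k}. qs ! i \<notin> halting T) \<and>
      concat (map (\<lambda>i. outf T (t ! i) (qs ! i)) [0..<k]) = x}"

definition path_sum ::
  "('a, 'b, 'c::comm_semiring_1) fst \<Rightarrow> nat \<Rightarrow> 'a tape_sym list \<Rightarrow> nat \<Rightarrow> 'b list \<Rightarrow> nat \<Rightarrow> 'c" where
  "path_sum T q t k x p = (\<Sum>qs\<in>runs_from T q t k x p. path_weight T t k qs)"

lemma runs_eq_runs_from_init: "runs T t k x p = runs_from T (init T) t k x p"
  unfolding runs_def runs_from_def by simp

lemma finite_runs_from: "finite (states T) \<Longrightarrow> finite (runs_from T q t k x p)"
  by (rule finite_subset[OF _ finite_lists_length_eq[of "states T" "Suc k"]]) (auto simp: runs_from_def)

lemma path_sum_0: "path_sum T q t 0 x p = of_bool (q = p \<and> x = [] \<and> q \<in> states T)"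
proof -
  have "runs_from T q t 0 x p = (if q = p \<and> x = [] \<and> q \<in> states T then {[q]} else {})"
    unfolding runs_from_def by (auto simp: length_Suc_conv)
  then show ?thesis
    by (auto simp: path_sum_def path_weight_def)
qed

lemma Cons_mem_runs_from_Suc:
  "q # qs \<in> runs_from T q0 (a # t) (Suc k) x p \<longleftrightarrow>
     q = q0 \<and> q \<in> states T \<and> take (length (outf T a q)) x = outf T a q \<and>
     (0 < k \<longrightarrow> qs ! 0 \<notin> halting T) \<and> qs \<in> runs_from T (qs ! 0) t k (drop (length (outf T a q)) x) p"
proof -
  have outputs: "concat (map (\<lambda>i. outf T ((a # t) ! i) ((q # qs) ! i)) [0..<Suc k]) =
      outf T a q @ concat (map (\<lambda>i. outf T (t ! i) (qs ! i)) [0..<k])"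
    by (simp add: upt_conv_Cons map_Suc_upt[symmetric] o_def del: upt_Suc)
  have intermediate: "(\<forall>i\<in>{1..<Suc k}. (q # qs) ! i \<notin> halting T) \<longleftrightarrow>
      (0 < k \<longrightarrow> qs ! 0 \<notin> halting T) \<and> (\<forall>i\<in>{1..<k}. qs ! i \<notin> halting T)"
  proof -
    have "{1..<Suc k} = Suc ` {..<k}"
      by (simp add: lessThan_atLeast0 image_Suc_atLeastLessThan)
    moreover have "(\<forall>i\<in>{..<k}. qs ! i \<notin> halting T) \<longleftrightarrow>
        (0 < k \<longrightarrow> qs ! 0 \<notin> halting T) \<and> (\<forall>i\<in>{1..<k}. qs ! i \<notin> halting T)"
      by (auto simp: Ball_def) (metis One_nat_def Suc_leI neq0_conv)
    ultimately show ?thesis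
      by simp
  qed
  show ?thesis
    unfolding runs_from_def mem_Collect_eq outputs intermediate
    by (cases qs) (auto simp: append_eq_conv_conj)
qed

lemma runs_from_Cons_Suc:
  "runs_from T q (a # t) (Suc k) x p =
     (if q \<in> states T \<and> take (length (outf T a q)) x = outf T a q then
        Cons q ` (\<Union>q'\<in>{q'\<in>states T. 0 < k \<longrightarrow> q' \<notin> halting T}.
                     runs_from T q' t k (drop (length (outf T a q)) x) p)
      else {})" (is "?L = ?R")
proof (rule set_eqI)
  have start: "qs \<in> runs_from T q' t k y p \<Longrightarrow> qs ! 0 = q' \<and> q' \<in> states T" for qs q' y
    unfolding runs_from_def by (cases qs) auto
  fix qs
  show "qs \<in> ?L \<longleftrightarrow> qs \<in> ?R"
  proof (cases qs)
    case Nil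
    then show ?thesis by (auto simp: runs_from_def)
  next
    case (Cons q1 qs')
    let ?y = "drop (length (outf T a q)) x"
    have "qs' \<in> (\<Union>q'\<in>{q'\<in>states T. 0 < k \<longrightarrow> q' \<notin> halting T}. runs_from T q' t k ?y p) \<longleftrightarrow>
        (0 < k \<longrightarrow> qs' ! 0 \<notin> halting T) \<and> qs' \<in> runs_from T (qs' ! 0) t k ?y p"
      using start by blast
    then show ?thesis
      unfolding Cons Cons_mem_runs_from_Suc by (auto simp: image_iff)
  qed
qed

lemma path_sum_Cons_Suc:
  assumes "finite (states T)" and "q \<in> states T"
  shows "path_sum T q (a # t) (Suc k) x p =
     (if take (length (outf T a q)) x = outf T a q then
        \<Sum>q'\<in>{q'\<in>states T. 0 < k \<longrightarrow> q' \<notin> halting T}.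
          trans T a q q' * path_sum T q' t k (drop (length (outf T a q)) x) p
      else 0)"
proof (cases "take (length (outf T a q)) x = outf T a q")
  case True
  let ?y = "drop (length (outf T a q)) x"
  let ?Q = "{q'\<in>states T. 0 < k \<longrightarrow> q' \<notin> halting T}"
  have start: "qs ! 0 = q'" if "qs \<in> runs_from T q' t k ?y p" for qs q'
    using that unfolding runs_from_def by auto
  have "path_sum T q (a # t) (Suc k) x p =
      (\<Sum>qs\<in>(\<Union>q'\<in>?Q. runs_from T q' t k ?y p). path_weight T (a # t) (Suc k) (q # qs))"
    unfolding path_sum_def runs_from_Cons_Suc using assms True
    by (simp add: sum.reindex)
  also have "\<dots> = (\<Sum>q'\<in>?Q. \<Sum>qs\<in>runs_from T q' t k ?y p. path_weight T (a # t) (Suc k) (q # qs))"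
    by (rule sum.UNION_disjoint) (use assms start in \<open>auto simp: finite_runs_from\<close>)
  also have "\<dots> = (\<Sum>q'\<in>?Q. trans T a q q' * path_sum T q' t k ?y p)"
    unfolding path_sum_def sum_distrib_left path_weight_def prod.lessThan_Suc_shift
    by (intro sum.cong refl) (simp add: start)
  finally show ?thesis
    using True by simp
next
  case False
  then show ?thesis
    unfolding path_sum_def runs_from_Cons_Suc by simp
qed

section \<open>Deterministic runs\<close>

fun det_run ::
  "('a tape_sym \<Rightarrow> nat \<Rightarrow> nat) \<Rightarrow> nat set \<Rightarrow> ('a tape_sym \<Rightarrow> nat \<Rightarrow> 'b list) \<Rightarrow>
   nat \<Rightarrow> 'a tape_sym list \<Rightarrow> (nat \<times> 'b list \<times> nat) option" where
  "det_run \<delta> H f q [] = None"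
| "det_run \<delta> H f q (a # t) =
     (if \<delta> a q \<in> H then Some (\<delta> a q, f a q, 1)
      else map_option (\<lambda>(p, y, k). (p, f a q @ y, Suc k)) (det_run \<delta> H f (\<delta> a q) t))"

lemma det_run_time_bounds: "det_run \<delta> H f q t = Some (p, y, k) \<Longrightarrow> 1 \<le> k \<and> k \<le> length t"
  by (induction t arbitrary: q y k) (auto split: if_splits)

lemma det_run_halts_in_invariant:
  assumes "\<And>a q. q \<in> S \<Longrightarrow> \<delta> a q \<in> S" and "q \<in> S" and "det_run \<delta> H f q t = Some (p, y, k)"
  shows "p \<in> S"
  using assms(2,3) by (induction t arbitrary: q y k) (auto split: if_splits intro: assms(1))

lemma path_sum_det_run:
  fixes T :: "('a, 'b, 'c::comm_semiring_1) fst"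
  assumes fin: "finite (states T)"
    and closed: "\<And>a q. a \<in> set t \<Longrightarrow> q \<in> states T \<Longrightarrow> \<delta> a q \<in> states T"
    and det: "\<And>a q q'. a \<in> set t \<Longrightarrow> q \<in> states T \<Longrightarrow> trans T a q q' = of_bool (q' = \<delta> a q)"
  shows "q \<in> states T \<Longrightarrow> p \<in> halting T \<Longrightarrow> 1 \<le> k \<Longrightarrow> k \<le> length t \<Longrightarrow>
    path_sum T q t k x p = of_bool (det_run \<delta> (halting T) (outf T) q t = Some (p, x, k))"
  using closed det
proof (induction t arbitrary: q k x)
  case Nil
  then show ?case by simp
next
  case (Cons a t)
  obtain k' where k: "k = Suc k'"
    using Cons.prems by (cases k) auto
  let ?o = "outf T a q"
  let ?y = "drop (length ?o) x"
  have step: "\<delta> a q \<in> states T"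
    using Cons.prems by simp
  have path_sum_step: "path_sum T q (a # t) (Suc k') x p =
      of_bool (take (length ?o) x = ?o \<and> (0 < k' \<longrightarrow> \<delta> a q \<notin> halting T)) *
      path_sum T (\<delta> a q) t k' ?y p"
    unfolding path_sum_Cons_Suc[OF fin \<open>q \<in> states T\<close>] using Cons.prems step fin
    by (simp add: Int_insert_right)
  have emits: "?o @ y = x \<longleftrightarrow> take (length ?o) x = ?o \<and> y = ?y" for y
    by (metis append_eq_conv_conj)
  show ?case
  proof (cases "k' = 0")
    case True
    have "det_run \<delta> (halting T) (outf T) (\<delta> a q) t \<noteq> Some (p', y, 0)" for p' y
      using det_run_time_bounds by fastforce
    then show ?thesis
      unfolding k path_sum_step unfolding True path_sum_0 using step Cons.prems(2) emits
      by (auto split: option.splits)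
  next
    case False
    show ?thesis
    proof (cases "\<delta> a q \<in> halting T")
      case True
      then show ?thesis
        unfolding k path_sum_step using False by simp
    next
      case False
      have "path_sum T (\<delta> a q) t k' ?y p =
          of_bool (det_run \<delta> (halting T) (outf T) (\<delta> a q) t = Some (p, ?y, k'))"
        using Cons \<open>k' \<noteq> 0\<close> step k by simp
      then show ?thesis
        unfolding k path_sum_step using False emits by (auto split: option.splits)
    qed
  qed
qed

section \<open>A transducer for \<open>R\<^sub>2\<close>\<close>

text \<open>State 0 is the start state; 1 and 2 (3 and 4) are the first (second) branch before and
  after reading the 2; 5 and 6 accept, 7, 8, 9 reject.\<close>
definition R2_step :: "sym3 tape_sym \<Rightarrow> nat \<Rightarrow> nat" where
  "R2_step a q = (case a of
      Inp T2 \<Rightarrow> (if q = 1 then 2 else if q = 2 then 7 else if q = 7 then 1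
                else if q = 3 then 4 else if q = 4 then 8 else if q = 8 then 3 else q)
    | REnd \<Rightarrow> (if q = 0 then 9 else if q = 9 then 0 else if q = 1 then 7 else if q = 7 then 1
              else if q = 2 then 5 else if q = 5 then 2 else if q = 3 then 8 else if q = 8 then 3
              else if q = 4 then 6 else if q = 6 then 4 else q)
    | _ \<Rightarrow> q)"

definition R2_out :: "sym3 tape_sym \<Rightarrow> nat \<Rightarrow> bit list" where
  "R2_out a q = (if q \<in> {1, 4} then (case a of Inp T0 \<Rightarrow> [B0] | Inp T1 \<Rightarrow> [B1] | _ \<Rightarrow> []) else [])"

definition R2_branch :: "nat \<Rightarrow> sym3 list \<Rightarrow> (nat \<times> bit list \<times> nat) option" where
  "R2_branch q v = det_run R2_step {5, 6, 7, 8, 9} R2_out q (map Inp v @ [REnd])"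

lemma bit_to_sym3_eq_iff [simp]:
  "bit_to_sym3 b = T0 \<longleftrightarrow> b = B0" "bit_to_sym3 b = T1 \<longleftrightarrow> b = B1" "bit_to_sym3 b \<noteq> T2"
  "T0 = bit_to_sym3 b \<longleftrightarrow> b = B0" "T1 = bit_to_sym3 b \<longleftrightarrow> b = B1" "T2 \<noteq> bit_to_sym3 b"
  "bit_to_sym3 b = bit_to_sym3 b' \<longleftrightarrow> b = b'"
  by (cases b; cases b'; simp)+

lemma R2_branch_2: "\<exists>k. R2_branch 2 u = Some (if T2 \<in> set u then 7 else 5, [], k)"
proof (induction u)
  case (Cons s u)
  then show ?case by (cases s) (auto simp: R2_branch_def R2_step_def R2_out_def)
qed (simp add: R2_branch_def R2_step_def R2_out_def)

lemma R2_branch_4_accepts: "(\<exists>k. R2_branch 4 u = Some (6, w, k)) \<longleftrightarrow> u = map bit_to_sym3 w"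
proof (induction u arbitrary: w)
  case (Cons s u)
  then show ?case
    by (cases s) (auto simp: R2_branch_def R2_step_def R2_out_def map_eq_Cons_conv Cons_eq_map_conv)
qed (auto simp: R2_branch_def R2_step_def R2_out_def)

lemma R2_branch_1_accepts:
  "(\<exists>k. R2_branch 1 v = Some (5, w, k)) \<longleftrightarrow> (\<exists>u. v = map bit_to_sym3 w @ T2 # u \<and> T2 \<notin> set u)"
proof (induction v arbitrary: w)
  case (Cons s v)
  show ?case
  proof (cases s)
    case T2
    then show ?thesis using R2_branch_2[of v]
      by (auto simp: R2_branch_def R2_step_def R2_out_def Cons_eq_append_conv)
  qed (use Cons in \<open>auto simp: R2_branch_def R2_step_def R2_out_def Cons_eq_append_conv Cons_eq_map_conv\<close>)
qed (simp add: R2_branch_def R2_step_def R2_out_def)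

lemma R2_branch_3_accepts:
  "(\<exists>k. R2_branch 3 v = Some (6, w, k)) \<longleftrightarrow> (\<exists>x. v = map bit_to_sym3 x @ T2 # map bit_to_sym3 w)"
proof (induction v)
  case (Cons s v)
  show ?case
  proof (cases s)
    case T2
    then show ?thesis using R2_branch_4_accepts[of v w]
      by (auto simp: R2_branch_def R2_step_def R2_out_def Cons_eq_append_conv)
  qed (use Cons in \<open>auto simp: R2_branch_def R2_step_def R2_out_def Cons_eq_append_conv Cons_eq_map_conv\<close>)
qed (simp add: R2_branch_def R2_step_def R2_out_def)

lemma map_bit_to_sym3_append_T2_eq:
  "map bit_to_sym3 x @ T2 # u = map bit_to_sym3 y @ T2 # u' \<Longrightarrow> x = y \<and> u = u'"
proof (induction x arbitrary: y)
  case Nil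
  then show ?case by (cases y) auto
next
  case (Cons b x)
  then show ?case by (cases y) auto
qed

lemma R2_iff_branches_accept:
  "(v, w) \<in> R2 \<longleftrightarrow> (\<exists>k. R2_branch 1 v = Some (5, w, k)) \<and> (\<exists>k. R2_branch 3 v = Some (6, w, k))"
  unfolding R2_branch_1_accepts R2_branch_3_accepts R2_def
  by (auto dest: map_bit_to_sym3_append_T2_eq)

definition R2_transducer :: "(nat \<Rightarrow> nat \<Rightarrow> 'c::zero_neq_one) \<Rightarrow> (sym3, bit, 'c) fst" where
  "R2_transducer start = \<lparr>states = {0..9}, init = 0, acc = {5, 6}, rej = {7, 8, 9},
     trans = (\<lambda>a q p. if a = LEnd then start q p else of_bool (p = R2_step a q)), outf = R2_out\<rparr>"

lemma R2_transducer_simps [simp]: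
  "states (R2_transducer start) = {0..9}" "init (R2_transducer start) = 0"
  "acc (R2_transducer start) = {5, 6}" "rej (R2_transducer start) = {7, 8, 9}"
  "trans (R2_transducer start) a q p = (if a = LEnd then start q p else of_bool (p = R2_step a q))"
  "outf (R2_transducer start) = R2_out"
  by (simp_all add: R2_transducer_def)

lemma halting_R2_transducer [simp]: "halting (R2_transducer start) = {5, 6, 7, 8, 9}"
  by (auto simp: halting_def)

lemma R2_step_closed: "q \<in> {0..9} \<Longrightarrow> R2_step a q \<in> {0..9}"
  by (auto simp: R2_step_def split: tape_sym.split sym3.split)

lemma inj_on_R2_step: "inj_on (R2_step a) {0..9}"
proof -
  have REnd: "R2_step REnd (R2_step REnd q) = q" for q
    by (simp add: R2_step_def)
  have T2: "R2_step (Inp T2) (R2_step (Inp T2) (R2_step (Inp T2) q)) = q" for q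
    by (simp add: R2_step_def)
  have "inj (R2_step a)"
  proof (cases "a = Inp T2 \<or> a = REnd")
    case True
    then consider "a = Inp T2" | "a = REnd"
      by blast
    then show ?thesis
    proof cases
      case 1
      show ?thesis
        unfolding 1 by (rule inj_on_inverseI[where g = "\<lambda>q. R2_step (Inp T2) (R2_step (Inp T2) q)"]) (rule T2)
    next
      case 2
      show ?thesis
        unfolding 2 by (rule inj_on_inverseI[where g = "R2_step REnd"]) (rule REnd)
    qed
  next
    case False
    then have "R2_step a = id"
      by (auto simp: R2_step_def split: tape_sym.split sym3.split)
    then show ?thesis
      by simp
  qed
  then show ?thesis
    by (rule inj_on_subset) simp
qed

lemma R2_step_REnd_halts: "q \<in> {0..9} - {5, 6, 7, 8, 9} \<Longrightarrow> R2_step REnd q \<in> {5, 6, 7, 8, 9}"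
  by (auto simp: R2_step_def)

lemma fst_basic_R2_transducer: "fst_basic (R2_transducer start)"
  by (simp add: fst_basic_def)

lemma is_pfst_R2_transducer:
  assumes "\<And>q p. 0 \<le> start q p" and "\<And>q. q \<in> {0..9} \<Longrightarrow> (\<Sum>p\<in>{0..9}. start q p) = 1"
  shows "is_pfst (R2_transducer start)"
proof -
  let ?T = "R2_transducer start"
  have "0 \<le> trans ?T a q p" for a q p
    using assms(1) by simp
  moreover have "(\<Sum>p\<in>states ?T. trans ?T a q p) = 1" if "q \<in> states ?T" for a q
  proof (cases "a = LEnd")
    case False
    have "R2_step a q \<in> {0..9}"
      using R2_step_closed that by simp
    then show ?thesis
      using False by (simp add: Int_insert_right)
  qed (use assms(2) that in simp)
  moreover have "trans ?T REnd q p = 0" if "q \<in> states ?T - halting ?T" "p \<in> states ?T - halting ?T" for q p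
    using R2_step_REnd_halts[of q] that by auto
  ultimately show ?thesis
    unfolding is_pfst_def using fst_basic_R2_transducer by blast
qed

lemma is_qfst_R2_transducer:
  assumes "\<And>q q'. q \<in> {0..9} \<Longrightarrow> q' \<in> {0..9} \<Longrightarrow>
      (\<Sum>p\<in>{0..9}. start q p * cnj (start q' p)) = (if q = q' then 1 else 0)"
  shows "is_qfst (R2_transducer start)"
proof -
  let ?T = "R2_transducer start"
  have "(\<Sum>p\<in>states ?T. trans ?T a q p * cnj (trans ?T a q' p)) = (if q = q' then 1 else 0)"
    if "q \<in> states ?T" "q' \<in> states ?T" for a q q'
  proof (cases "a = LEnd")
    case False
    have "R2_step a q \<in> {0..9}" and "R2_step a q = R2_step a q' \<longleftrightarrow> q = q'"
      using R2_step_closed inj_on_R2_step[of a] that by (simp_all add: inj_on_eq_iff)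
    then show ?thesis
      using False by (simp add: Int_insert_right)
  qed (use assms that in simp)
  moreover have "trans ?T REnd q p = 0" if "q \<in> states ?T - halting ?T" "p \<in> states ?T - halting ?T" for q p
    using R2_step_REnd_halts[of q] that by auto
  ultimately show ?thesis
    unfolding is_qfst_def using fst_basic_R2_transducer by blast
qed

lemma path_sum_R2_transducer:
  fixes start :: "nat \<Rightarrow> nat \<Rightarrow> 'c::comm_semiring_1"
  assumes start: "\<And>p. p \<notin> {1, 3, 7} \<Longrightarrow> start 0 p = 0"
    and k: "k \<le> Suc (length v)" and p: "p \<in> {5, 6}"
  shows "path_sum (R2_transducer start) 0 (tape v) (Suc k) w p =
     start 0 1 * of_bool (R2_branch 1 v = Some (p, w, k)) +
     start 0 3 * of_bool (R2_branch 3 v = Some (p, w, k))"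
proof -
  let ?T = "R2_transducer start"
  let ?t = "map Inp v @ [REnd]"
  have fin: "finite (states ?T)" and init: "0 \<in> states ?T"
    by simp_all
  have first_step: "path_sum ?T 0 (tape v) (Suc k) w p =
      (\<Sum>q\<in>{q\<in>{0..9}. 0 < k \<longrightarrow> q \<notin> {5, 6, 7, 8, 9}}. start 0 q * path_sum ?T q ?t k w p)"
    unfolding tape_def path_sum_Cons_Suc[OF fin init] by (simp add: R2_out_def)
  show ?thesis
  proof (cases "k = 0")
    case True
    have "R2_branch q v \<noteq> Some (p, w, 0)" for q
      using det_run_time_bounds unfolding R2_branch_def by fastforce
    moreover have "start 0 p = 0"
      using start p by auto
    ultimately show ?thesis
      unfolding first_step unfolding True path_sum_0 by simp
  next
    case False
    have branch: "path_sum ?T q ?t k w p = of_bool (R2_branch q v = Some (p, w, k))" if "q \<in> {0..9}" for q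
    proof -
      have "path_sum ?T q ?t k w p = of_bool (det_run R2_step (halting ?T) (outf ?T) q ?t = Some (p, w, k))"
        by (rule path_sum_det_run) (use that p k False R2_step_closed in auto)
      then show ?thesis
        by (simp add: R2_branch_def)
    qed
    have "{q\<in>{0..9}. 0 < k \<longrightarrow> q \<notin> {5, 6, 7, 8, 9}} = {0, 1, 2, 3, 4::nat}"
      using False by auto
    then show ?thesis
      unfolding first_step using start[of 0] start[of 2] start[of 4] branch[of 1] branch[of 3] by simp
  qed
qed

lemma R2_branch_1_not_6: "R2_branch 1 v \<noteq> Some (6, y, k)"
proof
  assume "R2_branch 1 v = Some (6, y, k)"
  then have "6 \<in> {1, 2, 5, 7::nat}"
    unfolding R2_branch_def
    by (rule det_run_halts_in_invariant[rotated 2]) (auto simp: R2_step_def split: tape_sym.split sym3.split)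
  then show False by simp
qed

lemma R2_branch_3_not_5: "R2_branch 3 v \<noteq> Some (5, y, k)"
proof
  assume "R2_branch 3 v = Some (5, y, k)"
  then have "5 \<in> {3, 4, 6, 8::nat}"
    unfolding R2_branch_def
    by (rule det_run_halts_in_invariant[rotated 2]) (auto simp: R2_step_def split: tape_sym.split sym3.split)
  then show False by simp
qed

lemma sum_R2_branch_over_halting_times:
  "(\<Sum>k<Suc (Suc (length v)). of_bool (R2_branch q v = Some (p, w, k))) =
     (of_bool (\<exists>k. R2_branch q v = Some (p, w, k)) :: 'c::semiring_1)"
proof (cases "\<exists>k. R2_branch q v = Some (p, w, k)")
  case True
  then obtain k0 where k0: "R2_branch q v = Some (p, w, k0)" ..
  then have "k0 < Suc (Suc (length v))"
    using det_run_time_bounds unfolding R2_branch_def by fastforce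
  then show ?thesis
    using k0 by simp
qed simp

text \<open>With \<open>g = id\<close> the left-hand side is \<open>pfst_prob\<close>, with \<open>g = (\<lambda>z. (cmod z)\<^sup>2)\<close> it is
  \<open>qfst_prob\<close>.\<close>
lemma accepting_sum_R2_transducer:
  fixes start :: "nat \<Rightarrow> nat \<Rightarrow> 'c::comm_semiring_1" and g :: "'c \<Rightarrow> real"
  assumes start: "\<And>p. p \<notin> {1, 3, 7} \<Longrightarrow> start 0 p = 0" "start 0 1 = c" "start 0 3 = c"
    and "g 0 = 0"
  shows "(\<Sum>k\<in>{1..length (tape v)}. \<Sum>p\<in>acc (R2_transducer start).
            g (path_sum (R2_transducer start) 0 (tape v) k w p)) =
     g c * (of_bool (\<exists>k. R2_branch 1 v = Some (5, w, k)) + of_bool (\<exists>k. R2_branch 3 v = Some (6, w, k)))"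
proof -
  let ?T = "R2_transducer start"
  have g: "g (c * of_bool b) = g c * of_bool b" for b
    using \<open>g 0 = 0\<close> by simp
  have at_5: "g (path_sum ?T 0 (tape v) (Suc k) w 5) = g c * of_bool (R2_branch 1 v = Some (5, w, k))"
    and at_6: "g (path_sum ?T 0 (tape v) (Suc k) w 6) = g c * of_bool (R2_branch 3 v = Some (6, w, k))"
    if "k < Suc (Suc (length v))" for k
    using path_sum_R2_transducer[of start k v _ w, OF start(1)] that start(2,3) g
      R2_branch_1_not_6 R2_branch_3_not_5
    by (simp_all add: mult.commute)
  have "(\<Sum>k\<in>{1..length (tape v)}. \<Sum>p\<in>acc ?T. g (path_sum ?T 0 (tape v) k w p)) =
      (\<Sum>k<Suc (Suc (length v)). g c * of_bool (R2_branch 1 v = Some (5, w, k)) +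
                                  g c * of_bool (R2_branch 3 v = Some (6, w, k)))"
  proof -
    have shift: "(\<Sum>k\<in>{1..length (tape v)}. F k) = (\<Sum>k<Suc (Suc (length v)). F (Suc k))" for F :: "nat \<Rightarrow> real"
      using sum.atLeast1_atMost_eq[of F "length (tape v)"] by (simp add: tape_def)
    show ?thesis
      unfolding shift by (intro sum.cong) (simp_all add: at_5 at_6)
  qed
  also have "\<dots> = g c * (of_bool (\<exists>k. R2_branch 1 v = Some (5, w, k)) +
                           of_bool (\<exists>k. R2_branch 3 v = Some (6, w, k)))"
    by (simp add: sum.distrib sum_distrib_left[symmetric] sum_R2_branch_over_halting_times
        distrib_left del: sum.lessThan_Suc)
  finally show ?thesis .
qed

definition R2_start_stochastic :: "nat \<Rightarrow> nat \<Rightarrow> real" where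
  "R2_start_stochastic q p = (if q = 0 then of_bool (p \<in> {1, 3, 7}) / 3 else of_bool (p = q))"

text \<open>Row 0 is \<open>(e\<^sub>1 + e\<^sub>3 + e\<^sub>7)/\<surd>3\<close>; rows 1 and 3 complete it to an orthonormal basis of
  \<open>span {e\<^sub>1, e\<^sub>3, e\<^sub>7}\<close>, and row 7 is \<open>e\<^sub>0\<close>.\<close>
definition R2_start_unitary :: "nat \<Rightarrow> nat \<Rightarrow> real" where
  "R2_start_unitary q p =
     (if q = 0 then of_bool (p \<in> {1, 3, 7}) * sqrt (1/3)
      else if q = 1 then (if p = 1 then sqrt (1/2) else if p = 3 then - sqrt (1/2) else 0)
      else if q = 3 then (if p = 1 \<or> p = 3 then sqrt (1/6) else if p = 7 then - 2 * sqrt (1/6) else 0)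
      else if q = 7 then of_bool (p = 0)
      else of_bool (p = q))"

lemma R2_states_eq: "{0..9} = {0, 1, 2, 3, 4, 5, 6, 7, 8, 9::nat}"
  by auto

lemma R2_start_stochastic_rows: "q \<in> {0..9} \<Longrightarrow> (\<Sum>p\<in>{0..9}. R2_start_stochastic q p) = 1"
  unfolding R2_states_eq by (auto simp: R2_start_stochastic_def)

lemma R2_start_unitary_orthonormal:
  assumes "q \<in> {0..9}" "q' \<in> {0..9}"
  shows "(\<Sum>p\<in>{0..9}. R2_start_unitary q p * R2_start_unitary q' p) = of_bool (q = q')"
proof -
  have "sqrt (1/3) * sqrt (1/3) = (1/3 :: real)" "sqrt (1/2) * sqrt (1/2) = (1/2 :: real)"
    "sqrt (1/6) * sqrt (1/6) = (1/6 :: real)"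
    by simp_all
  then show ?thesis
    using assms unfolding R2_states_eq
    by (auto simp: R2_start_unitary_def algebra_simps)
qed

lemma computes_with_two_thirds:
  assumes "\<And>v w. P T w v = (of_bool (A v w) + of_bool (B v w)) / 3"
    and "\<And>v w. (v, w) \<in> R \<longleftrightarrow> A v w \<and> B v w"
  shows "computes_with P T R (2/3)"
  unfolding computes_with_def assms by auto

abbreviation R2_pfst :: "(sym3, bit, real) fst" where
  "R2_pfst \<equiv> R2_transducer R2_start_stochastic"

abbreviation R2_qfst :: "(sym3, bit, complex) fst" where
  "R2_qfst \<equiv> R2_transducer (\<lambda>q p. complex_of_real (R2_start_unitary q p))"

lemma pfst_prob_R2_pfst:
  "pfst_prob R2_pfst w v =
     (of_bool (\<exists>k. R2_branch 1 v = Some (5, w, k)) + of_bool (\<exists>k. R2_branch 3 v = Some (6, w, k))) / 3"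
  unfolding pfst_prob_def Let_def runs_eq_runs_from_init path_sum_def[symmetric]
  using accepting_sum_R2_transducer[of R2_start_stochastic "1/3" id v w]
  by (simp add: R2_start_stochastic_def)

lemma qfst_prob_R2_qfst:
  "qfst_prob R2_qfst w v =
     (of_bool (\<exists>k. R2_branch 1 v = Some (5, w, k)) + of_bool (\<exists>k. R2_branch 3 v = Some (6, w, k))) / 3"
  unfolding qfst_prob_def Let_def runs_eq_runs_from_init path_sum_def[symmetric]
  using accepting_sum_R2_transducer[of _ "complex_of_real (sqrt (1/3))" "\<lambda>z. (cmod z)\<^sup>2" v w]
  by (simp add: R2_start_unitary_def)

theorem theorem6:
  shows "(\<exists>T :: (sym3, bit, real) fst. is_pfst T \<and> computes_with pfst_prob T R2 (2/3)) \<and>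
         (\<exists>T :: (sym3, bit, complex) fst. is_qfst T \<and> computes_with qfst_prob T R2 (2/3))"
proof (intro conjI exI)
  show "is_pfst R2_pfst"
    by (rule is_pfst_R2_transducer[OF _ R2_start_stochastic_rows]) (simp add: R2_start_stochastic_def)
  show "computes_with pfst_prob R2_pfst R2 (2/3)"
    by (rule computes_with_two_thirds[of pfst_prob R2_pfst, OF pfst_prob_R2_pfst R2_iff_branches_accept])
  show "is_qfst R2_qfst"
    by (rule is_qfst_R2_transducer) (simp add: R2_start_unitary_orthonormal flip: of_real_mult of_real_sum)
  show "computes_with qfst_prob R2_qfst R2 (2/3)"
    by (rule computes_with_two_thirds[of qfst_prob R2_qfst, OF qfst_prob_R2_qfst R2_iff_branches_accept])
qed

end
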